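(* Let $\varepsilon\in(0,\tfrac14)$ and let $m>1$ be a constant such that $1-\frac1m\le\frac{\mathrm{e}-1}{2\sqrt{\pi}\,\mathrm{e}}\sqrt{\varepsilon}$. Let $F\in\mathrm{Lip}_{\rm loc}(\mathbb{R})$ satisfy $F(p)=\frac1m p^m$ for $p\in[0,1]$ and $F(p)\le p$ for $p\in[-1,0]$, and let $g(x)=\max\{1-|x|,0\}$ for $x\in\mathbb{R}$. Let $u^\varepsilon$ be the viscosity solution of $u^\varepsilon_t+F(u^\varepsilon_x)=\varepsilon u^\varepsilon_{xx}$ in $\mathbb{R}\times(0,\infty)$, $u^\varepsilon(\cdot,0)=g$, and let $u$ be the viscosity solution of $u_t+F(u_x)=0$ in $\mathbb{R}\times(0,\infty)$, $u(\cdot,0)=g$. Then \[ |u^\varepsilon(0,1)-u(0,1)|\ge\frac{\mathrm{e}-1}{2\sqrt{\pi}\,\mathrm{e}}\sqrt{\varepsilon}. \] *)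

theory Defs
  imports "HOL-Analysis.Analysis"
begin

definition spacetime :: "(real \<times> real) set" where
  "spacetime = UNIV \<times> {0<..}"

definition lip_loc :: "(real \<Rightarrow> real) \<Rightarrow> bool" where
  "lip_loc F \<longleftrightarrow> (\<forall>x. \<exists>r>0. \<exists>L. L-lipschitz_on (cball x r) F)"

definition C1_test ::
  "(real \<times> real \<Rightarrow> real) \<Rightarrow> (real \<times> real \<Rightarrow> real) \<Rightarrow> (real \<times> real \<Rightarrow> real) \<Rightarrow> bool" where
  "C1_test ph phx pht \<longleftrightarrow>
     (\<forall>z. (ph has_derivative (\<lambda>h. phx z * fst h + pht z * snd h)) (at z))
     \<and> continuous_on UNIV phx \<and> continuous_on UNIV pht"

definition C21_test ::
  "(real \<times> real \<Rightarrow> real) \<Rightarrow> (real \<times> real \<Rightarrow> real) \<Rightarrow> (real \<times> real \<Rightarrow> real)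
     \<Rightarrow> (real \<times> real \<Rightarrow> real) \<Rightarrow> bool" where
  "C21_test ph phx pht phxx \<longleftrightarrow>
     C1_test ph phx pht
     \<and> (\<forall>x t. ((\<lambda>y. phx (y, t)) has_real_derivative phxx (x, t)) (at x))
     \<and> continuous_on UNIV phxx"

definition loc_max_in :: "(real \<times> real \<Rightarrow> real) \<Rightarrow> (real \<times> real) set \<Rightarrow> real \<times> real \<Rightarrow> bool" where
  "loc_max_in w S z \<longleftrightarrow> (\<exists>r>0. \<forall>y\<in>ball z r \<inter> S. w y \<le> w z)"

definition loc_min_in :: "(real \<times> real \<Rightarrow> real) \<Rightarrow> (real \<times> real) set \<Rightarrow> real \<times> real \<Rightarrow> bool" where
  "loc_min_in w S z \<longleftrightarrow> (\<exists>r>0. \<forall>y\<in>ball z r \<inter> S. w z \<le> w y)"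

definition visc_subsol_viscous :: "real \<Rightarrow> (real \<Rightarrow> real) \<Rightarrow> (real \<times> real \<Rightarrow> real) \<Rightarrow> bool" where
  "visc_subsol_viscous eps F u \<longleftrightarrow>
     continuous_on spacetime u \<and>
     (\<forall>ph phx pht phxx z. C21_test ph phx pht phxx \<and> z \<in> spacetime
        \<and> loc_max_in (\<lambda>y. u y - ph y) spacetime z
        \<longrightarrow> pht z + F (phx z) \<le> eps * phxx z)"

definition visc_supersol_viscous :: "real \<Rightarrow> (real \<Rightarrow> real) \<Rightarrow> (real \<times> real \<Rightarrow> real) \<Rightarrow> bool" where
  "visc_supersol_viscous eps F u \<longleftrightarrow>
     continuous_on spacetime u \<and>
     (\<forall>ph phx pht phxx z. C21_test ph phx pht phxx \<and> z \<in> spacetime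
        \<and> loc_min_in (\<lambda>y. u y - ph y) spacetime z
        \<longrightarrow> pht z + F (phx z) \<ge> eps * phxx z)"

definition visc_subsol_HJ :: "(real \<Rightarrow> real) \<Rightarrow> (real \<times> real \<Rightarrow> real) \<Rightarrow> bool" where
  "visc_subsol_HJ F u \<longleftrightarrow>
     continuous_on spacetime u \<and>
     (\<forall>ph phx pht z. C1_test ph phx pht \<and> z \<in> spacetime
        \<and> loc_max_in (\<lambda>y. u y - ph y) spacetime z
        \<longrightarrow> pht z + F (phx z) \<le> 0)"

definition visc_supersol_HJ :: "(real \<Rightarrow> real) \<Rightarrow> (real \<times> real \<Rightarrow> real) \<Rightarrow> bool" where
  "visc_supersol_HJ F u \<longleftrightarrow>
     continuous_on spacetime u \<and>
     (\<forall>ph phx pht z. C1_test ph phx pht \<and> z \<in> spacetime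
        \<and> loc_min_in (\<lambda>y. u y - ph y) spacetime z
        \<longrightarrow> pht z + F (phx z) \<ge> 0)"

text \<open>Admissible class for the Cauchy problem (the standard uniqueness class):
  continuous up to t = 0, attaining the initial datum, and bounded and uniformly
  continuous on every strip \<real> \<times> [0,T].\<close>
definition cauchy_class :: "(real \<Rightarrow> real) \<Rightarrow> (real \<times> real \<Rightarrow> real) \<Rightarrow> bool" where
  "cauchy_class g u \<longleftrightarrow>
     continuous_on (UNIV \<times> {0..}) u \<and> (\<forall>x. u (x, 0) = g x) \<and>
     (\<forall>T>0. bounded (u ` (UNIV \<times> {0..T})) \<and> uniformly_continuous_on (UNIV \<times> {0..T}) u)"

definition visc_sol_viscous :: "real \<Rightarrow> (real \<Rightarrow> real) \<Rightarrow> (real \<Rightarrow> real) \<Rightarrow> (real \<times> real \<Rightarrow> real) \<Rightarrow> bool" where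
  "visc_sol_viscous eps F g u \<longleftrightarrow>
     cauchy_class g u \<and> visc_subsol_viscous eps F u \<and> visc_supersol_viscous eps F u"

definition visc_sol_HJ :: "(real \<Rightarrow> real) \<Rightarrow> (real \<Rightarrow> real) \<Rightarrow> (real \<times> real \<Rightarrow> real) \<Rightarrow> bool" where
  "visc_sol_HJ F g u \<longleftrightarrow>
     cauchy_class g u \<and> visc_subsol_HJ F u \<and> visc_supersol_HJ F u"

end

(*
  Both solutions are compared with explicit barriers built from the free transport
  w_t + w_x = 0 and its viscous version w_t + w_x = eps w_xx.

  For the inviscid problem, F p >= p - (1 - 1/m) on [0, 1] (the tangent of p^m/m at p = 1),
  so the transported ramp max (x - t + 1) 0 + (1 - 1/m) t, which dominates g initially and
  has slopes in [0, 1], is a supersolution: u (0, 1) <= 1 - 1/m.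

  For the viscous problem, F p <= p on [-1, 1], so the heat-flow evolution of
  (x + 1)^+ - 2 x^+ <= g, transported with unit speed, is a subsolution. It is an explicit
  Gaussian average, and at (0, 1) the Mills ratio bounds for the normal tail give
  u^eps (0, 1) >= (1 - 1/e) sqrt (eps / pi) = 2 c sqrt eps with c = (e - 1) / (2 sqrt pi e),
  whereas u (0, 1) <= 1 - 1/m <= c sqrt eps by assumption.

  The comparison with the viscosity solutions only uses the definitions: the barriers are made
  coercive by a small multiple of sqrt (1 + x^2) and the difference is penalised by
  K exp (l t), which moves a positive maximum into the open strip, where the sign of the
  penalty's time derivative contradicts the viscosity inequality.
*)

theory Submission
  imports Defs "HOL-Probability.Distributions" "HOL-Real_Asymp.Real_Asymp"
begin

section \<open>The error function and the standard normal distribution\<close>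

definition erf :: "real \<Rightarrow> real" where
  "erf x = 2 / sqrt pi * (LBINT s=0..x. exp (- s\<^sup>2))"

lemma has_real_derivative_erf: "(erf has_real_derivative 2 / sqrt pi * exp (- x\<^sup>2)) (at x)"
proof -
  let ?I = "{-\<bar>x\<bar> - 1..\<bar>x\<bar> + 1}"
  have "continuous_on ?I (\<lambda>s. exp (- s\<^sup>2))"
    by (intro continuous_intros)
  then have "((\<lambda>y. LBINT s=ereal 0..ereal y. exp (- s\<^sup>2)) has_vector_derivative exp (- x\<^sup>2))
      (at x within ?I)"
    by (rule interval_integral_FTC2[rotated 2]) auto
  then have "((\<lambda>y. LBINT s=0..y. exp (- s\<^sup>2)) has_real_derivative exp (- x\<^sup>2)) (at x within ?I)"
    by (simp add: has_real_derivative_iff_has_vector_derivative zero_ereal_def)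
  moreover have "x \<in> interior ?I"
    by auto
  ultimately have "((\<lambda>y. LBINT s=0..y. exp (- s\<^sup>2)) has_real_derivative exp (- x\<^sup>2)) (at x)"
    by (metis at_within_interior)
  then show ?thesis
    unfolding erf_def[abs_def] by (rule DERIV_cmult)
qed

lemmas has_real_derivative_erf_chain[derivative_intros] = has_real_derivative_erf[THEN DERIV_chain2]

lemma erf_0 [simp]: "erf 0 = 0"
  by (simp add: erf_def zero_ereal_def)

lemma erf_minus: "erf (- x) = - erf x"
proof -
  have "\<forall>y. ((\<lambda>x. erf (- x) + erf x) has_real_derivative 0) (at y)"
    by (auto intro!: derivative_eq_intros)
  from DERIV_isconst_all[OF this, of x 0] show ?thesis
    by simp
qed

lemma erf_strict_mono: "strict_mono erf"
proof (rule strict_monoI)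
  fix x y :: real
  assume "x < y"
  then show "erf x < erf y"
  proof (rule DERIV_pos_imp_increasing)
    fix t :: real
    show "\<exists>d. (erf has_real_derivative d) (at t) \<and> 0 < d"
      using has_real_derivative_erf[of t] by auto
  qed
qed

lemma tendsto_gaussian_integral_Icc:
  "(\<lambda>n. LINT s|lborel. indicator {0..real n} s * exp (- s\<^sup>2)) \<longlonglongrightarrow> sqrt pi / 2"
proof -
  let ?f = "\<lambda>s. indicator {0..} s * exp (- s\<^sup>2) :: real"
  have "(\<lambda>n. LINT s|lborel. indicator {0..real n} s * exp (- s\<^sup>2)) \<longlonglongrightarrow> integral\<^sup>L lborel ?f"
  proof (rule integral_dominated_convergence[where w = ?f])
    show "integrable lborel ?f"
      using gaussian_moment_0 by (simp add: has_bochner_integral_iff)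
    show "AE s in lborel. (\<lambda>n. indicator {0..real n} s * exp (- s\<^sup>2)) \<longlonglongrightarrow> ?f s"
    proof (intro AE_I2 tendsto_eventually)
      fix s :: real
      show "\<forall>\<^sub>F n in sequentially. indicator {0..real n} s * exp (- s\<^sup>2) = ?f s"
        using eventually_ge_at_top[of "nat \<lceil>s\<rceil>"]
      proof eventually_elim
        case (elim n)
        then have "s \<le> real n"
          using real_nat_ceiling_ge[of s] by linarith
        then show ?case
          by (simp add: indicator_def)
      qed
    qed
    show "(\<lambda>s. indicator {0..real n} s * exp (- s\<^sup>2)) \<in> borel_measurable lborel" for n :: nat
      by measurable
    show "?f \<in> borel_measurable lborel"
      by measurable
    show "AE s in lborel. norm (indicator {0..real n} s * exp (- s\<^sup>2)) \<le> ?f s" for n :: nat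
      by (intro AE_I2) (simp add: indicator_def)
  qed
  then show ?thesis
    using gaussian_moment_0 by (simp add: has_bochner_integral_integral_eq)
qed

lemma tendsto_erf_at_top: "(erf \<longlongrightarrow> 1) at_top"
proof (rule tendsto_at_topI_sequentially_real)
  show "mono erf"
    using erf_strict_mono by (rule strict_mono_mono)
  have integral_eq: "LINT s|lborel. indicator {0..real n} s * exp (- s\<^sup>2) = sqrt pi / 2 * erf (real n)"
    for n
  proof -
    have "(LBINT s=0..real n. exp (- s\<^sup>2)) = (LBINT s:{0..real n}. exp (- s\<^sup>2))"
      unfolding zero_ereal_def by (rule interval_integral_Icc) simp
    then show ?thesis
      by (simp add: erf_def set_lebesgue_integral_def)
  qed
  from tendsto_gaussian_integral_Icc have "(\<lambda>n. sqrt pi / 2 * erf (real n)) \<longlonglongrightarrow> sqrt pi / 2"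
    by (simp only: integral_eq)
  from tendsto_mult_left[OF this, of "2 / sqrt pi"] show "(\<lambda>n. erf (real n)) \<longlonglongrightarrow> 1"
    by simp
qed

lemma erf_less_1: "erf x < 1"
proof -
  have "erf x < erf (x + 1)"
    using erf_strict_mono by (simp add: strict_mono_less)
  also have "erf (x + 1) \<le> 1"
  proof (rule tendsto_lowerbound[OF tendsto_erf_at_top])
    show "\<forall>\<^sub>F y in at_top. erf (x + 1) \<le> erf y"
      using eventually_ge_at_top[of "x + 1"]
      by eventually_elim (simp add: strict_mono_less_eq[OF erf_strict_mono])
  qed simp
  finally show ?thesis .
qed

lemma abs_erf_less_1: "\<bar>erf x\<bar> < 1"
  using erf_less_1[of x] erf_less_1[of "- x"] by (simp add: erf_minus)

definition std_normal_cdf :: "real \<Rightarrow> real" where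
  "std_normal_cdf x = (1 + erf (x / sqrt 2)) / 2"

lemma has_real_derivative_std_normal_cdf:
  "(std_normal_cdf has_real_derivative std_normal_density x) (at x)"
proof -
  have sqrt_2: "sqrt 2 * exp e / (2 * sqrt pi) = exp e / (sqrt pi * sqrt 2)" for e
    by (metis divide_divide_eq_left divide_divide_eq_left' numeral_Bit0_eq_double
        real_divide_square_eq real_sqrt_four real_sqrt_mult)
  have "(std_normal_cdf has_real_derivative exp (- (x / sqrt 2)\<^sup>2) / (sqrt pi * sqrt 2)) (at x)"
    unfolding std_normal_cdf_def[abs_def] by (auto intro!: derivative_eq_intros simp: sqrt_2)
  moreover have "exp (- (x / sqrt 2)\<^sup>2) / (sqrt pi * sqrt 2) = std_normal_density x"
    by (simp add: std_normal_density_def power_divide real_sqrt_mult mult.commute)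
  ultimately show ?thesis
    by simp
qed

lemma has_real_derivative_std_normal_density:
  "(std_normal_density has_real_derivative - x * std_normal_density x) (at x)"
  unfolding std_normal_density_def[abs_def]
  by (auto intro!: derivative_eq_intros simp: field_simps)

lemmas has_real_derivative_std_normal_cdf_chain[derivative_intros] =
  has_real_derivative_std_normal_cdf[THEN DERIV_chain2]
lemmas has_real_derivative_std_normal_density_chain[derivative_intros] =
  has_real_derivative_std_normal_density[THEN DERIV_chain2]

lemmas has_derivative_std_normal_cdf[derivative_intros] =
  has_real_derivative_std_normal_cdf[THEN DERIV_compose_FDERIV]
lemmas has_derivative_std_normal_density[derivative_intros] =
  has_real_derivative_std_normal_density[THEN DERIV_compose_FDERIV]

lemma continuous_on_std_normal_cdf [continuous_intros]:
  "continuous_on S f \<Longrightarrow> continuous_on S (\<lambda>x. std_normal_cdf (f x))"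
  by (rule continuous_on_compose2[of UNIV, OF DERIV_continuous_on[OF has_real_derivative_std_normal_cdf]]) auto

lemma continuous_on_std_normal_density [continuous_intros]:
  "continuous_on S f \<Longrightarrow> continuous_on S (\<lambda>x. std_normal_density (f x))"
  unfolding std_normal_density_def by (intro continuous_intros) auto

lemma std_normal_cdf_minus: "std_normal_cdf (- x) = 1 - std_normal_cdf x"
  using erf_minus[of "x / sqrt 2"] by (simp add: std_normal_cdf_def field_simps)

lemma std_normal_cdf_pos: "0 < std_normal_cdf x"
  using abs_erf_less_1[of "x / sqrt 2"] by (simp add: std_normal_cdf_def)

lemma std_normal_cdf_less_1: "std_normal_cdf x < 1"
  using abs_erf_less_1[of "x / sqrt 2"] by (simp add: std_normal_cdf_def)

lemma std_normal_cdf_mono: "x \<le> y \<Longrightarrow> std_normal_cdf x \<le> std_normal_cdf y"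
  using strict_mono_less_eq[OF erf_strict_mono, of "x / sqrt 2" "y / sqrt 2"]
  by (simp add: std_normal_cdf_def divide_right_mono)

lemma tendsto_std_normal_cdf_at_top: "(std_normal_cdf \<longlongrightarrow> 1) at_top"
proof -
  have "filterlim (\<lambda>x::real. x / sqrt 2) at_top at_top"
    by real_asymp
  from filterlim_compose[OF tendsto_erf_at_top this]
  have "((\<lambda>x. (1 + erf (x / sqrt 2)) / 2) \<longlongrightarrow> (1 + 1) / 2) at_top"
    by (intro tendsto_intros) auto
  then show ?thesis
    by (simp add: std_normal_cdf_def[abs_def])
qed

lemma std_normal_density_minus [simp]: "std_normal_density (- x) = std_normal_density x"
  by (simp add: std_normal_density_def)

lemma std_normal_density_le_0: "std_normal_density x \<le> std_normal_density 0"
  unfolding std_normal_density_def by (intro mult_left_mono) auto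

lemma std_normal_density_0: "std_normal_density 0 = 1 / sqrt (2 * pi)"
  by (simp add: std_normal_density_def)

lemma std_normal_tail_le:
  assumes "0 < a"
  shows "1 - std_normal_cdf a \<le> std_normal_density a / a"
proof -
  define h where "h s = std_normal_cdf s + std_normal_density s / a" for s
  have "h b \<le> h a" if "a \<le> b" for b
  proof (rule DERIV_nonpos_imp_nonincreasing[OF that])
    fix x assume "a \<le> x" "x \<le> b"
    then have "std_normal_density x * (1 - x / a) \<le> 0"
      using assms by (intro mult_nonneg_nonpos) (auto simp: field_simps)
    moreover have "(h has_real_derivative std_normal_density x * (1 - x / a)) (at x)"
      unfolding h_def[abs_def] using assms by (auto intro!: derivative_eq_intros simp: field_simps)
    ultimately show "\<exists>y. (h has_real_derivative y) (at x) \<and> y \<le> 0"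
      by blast
  qed
  moreover have "(h \<longlongrightarrow> 1) at_top"
  proof -
    have "((\<lambda>s. std_normal_density s) \<longlongrightarrow> 0) at_top"
      unfolding std_normal_density_def by real_asymp
    from tendsto_add[OF tendsto_std_normal_cdf_at_top tendsto_divide_zero[OF this, of a]] show ?thesis
      by (simp add: h_def[abs_def])
  qed
  ultimately have "1 \<le> h a"
    by (intro tendsto_upperbound[where F = at_top]) (auto simp: eventually_at_top_linorder intro!: exI[of _ a])
  then show ?thesis
    by (simp add: h_def)
qed

lemma std_normal_tail_ge:
  assumes "0 < a"
  shows "std_normal_density a * (1 / a - 1 / a ^ 3) \<le> 1 - std_normal_cdf a"
proof -
  define h where "h s = std_normal_cdf s + std_normal_density s * (1 / s - 1 / s ^ 3)" for s
  have "h a \<le> h b" if "a \<le> b" for b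
  proof (rule DERIV_nonneg_imp_nondecreasing[OF that])
    fix x assume "a \<le> x" "x \<le> b"
    then have "0 < x"
      using assms by simp
    then have "(h has_real_derivative 3 * std_normal_density x / x ^ 4) (at x)"
      unfolding h_def[abs_def] by (auto intro!: derivative_eq_intros simp: field_simps power_def)
    then show "\<exists>y. (h has_real_derivative y) (at x) \<and> 0 \<le> y"
      by fastforce
  qed
  moreover have "(h \<longlongrightarrow> 1) at_top"
  proof -
    have "((\<lambda>s. std_normal_density s * (1 / s - 1 / s ^ 3)) \<longlongrightarrow> 0) at_top"
      unfolding std_normal_density_def by real_asymp
    from tendsto_add[OF tendsto_std_normal_cdf_at_top this] show ?thesis
      by (simp add: h_def[abs_def])
  qed
  ultimately have "h a \<le> 1"
    by (intro tendsto_lowerbound[where F = at_top]) (auto simp: eventually_at_top_linorder intro!: exI[of _ a])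
  then show ?thesis
    by (simp add: h_def)
qed

section \<open>Heat-flow profiles\<close>

text \<open>\<open>heat_ramp y \<sigma>\<close> is the expectation of \<open>max (y + \<sigma> * Z) 0\<close> for a standard normal \<open>Z\<close>.\<close>

definition heat_ramp :: "real \<Rightarrow> real \<Rightarrow> real" where
  "heat_ramp y \<sigma> = y * std_normal_cdf (y / \<sigma>) + \<sigma> * std_normal_density (y / \<sigma>)"

lemma has_derivative_heat_ramp [derivative_intros]:
  fixes Y S :: "'a::real_normed_vector \<Rightarrow> real"
  assumes "(Y has_derivative Y') (at z within A)" "(S has_derivative S') (at z within A)" "0 < S z"
  shows "((\<lambda>z. heat_ramp (Y z) (S z)) has_derivative
      (\<lambda>h. std_normal_cdf (Y z / S z) * Y' h + std_normal_density (Y z / S z) * S' h)) (at z within A)"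
  unfolding heat_ramp_def using assms
  by (auto intro!: derivative_eq_intros simp: fun_eq_iff field_simps)

lemma heat_ramp_ge:
  assumes "0 < \<sigma>"
  shows "y \<le> heat_ramp y \<sigma>"
proof (cases "y \<le> 0")
  case True
  then have "0 \<le> - y * (1 - std_normal_cdf (y / \<sigma>))"
    using std_normal_cdf_less_1[of "y / \<sigma>"] by (intro mult_nonneg_nonneg) auto
  moreover have "0 \<le> \<sigma> * std_normal_density (y / \<sigma>)"
    using assms by simp
  ultimately show ?thesis
    unfolding heat_ramp_def by (simp add: algebra_simps)
next
  case False
  then have "y * (1 - std_normal_cdf (y / \<sigma>)) \<le> y * (std_normal_density (y / \<sigma>) / (y / \<sigma>))"
    using assms by (intro mult_left_mono std_normal_tail_le) auto
  also have "\<dots> = \<sigma> * std_normal_density (y / \<sigma>)"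
    using False assms by simp
  finally show ?thesis
    unfolding heat_ramp_def by (simp add: algebra_simps)
qed

lemma heat_ramp_nonneg:
  assumes "0 < \<sigma>"
  shows "0 \<le> heat_ramp y \<sigma>"
proof -
  have "y \<le> heat_ramp y \<sigma>" "- y \<le> heat_ramp (- y) \<sigma>"
    using assms by (blast intro: heat_ramp_ge)+
  moreover have "heat_ramp (- y) \<sigma> = heat_ramp y \<sigma> - y"
    by (simp add: heat_ramp_def std_normal_cdf_minus algebra_simps)
  ultimately show ?thesis
    by linarith
qed

lemma heat_ramp_le:
  assumes "0 < \<sigma>"
  shows "heat_ramp y \<sigma> \<le> max y 0 + \<sigma> * std_normal_density 0"
proof -
  have "y * std_normal_cdf (y / \<sigma>) \<le> max y 0"
    using std_normal_cdf_pos[of "y / \<sigma>"] std_normal_cdf_less_1[of "y / \<sigma>"]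
    by (cases "0 \<le> y") (auto simp: mult_left_le mult_nonpos_nonneg)
  moreover have "\<sigma> * std_normal_density (y / \<sigma>) \<le> \<sigma> * std_normal_density 0"
    using assms std_normal_density_le_0 by (simp add: mult_left_mono)
  ultimately show ?thesis
    unfolding heat_ramp_def by linarith
qed

lemma heat_ramp_minus_1_le:
  assumes "0 < \<sigma>"
  shows "heat_ramp (- 1) \<sigma> \<le> \<sigma> ^ 3 * std_normal_density (1 / \<sigma>)"
proof -
  have "std_normal_density (1 / \<sigma>) * (\<sigma> - \<sigma> ^ 3) \<le> 1 - std_normal_cdf (1 / \<sigma>)"
    using std_normal_tail_ge[of "1 / \<sigma>"] assms by (simp add: power_one_over)
  then show ?thesis
    unfolding heat_ramp_def
    by (simp add: std_normal_cdf_minus[of "1 / \<sigma>", simplified] algebra_simps)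
qed

text \<open>The same average of \<open>max (y + 1) 0 - 2 * max y 0\<close>, which lies below the tent
  \<open>max (1 - \<bar>y\<bar>) 0\<close> and coincides with it for \<open>y \<le> 1\<close>.\<close>

definition heat_tent :: "real \<Rightarrow> real \<Rightarrow> real" where
  "heat_tent y \<sigma> = heat_ramp (y + 1) \<sigma> - 2 * heat_ramp y \<sigma>"

definition heat_tent_dy :: "real \<Rightarrow> real \<Rightarrow> real" where
  "heat_tent_dy y \<sigma> = std_normal_cdf ((y + 1) / \<sigma>) - 2 * std_normal_cdf (y / \<sigma>)"

definition heat_tent_dsigma :: "real \<Rightarrow> real \<Rightarrow> real" where
  "heat_tent_dsigma y \<sigma> = std_normal_density ((y + 1) / \<sigma>) - 2 * std_normal_density (y / \<sigma>)"

lemma has_derivative_heat_tent [derivative_intros]: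
  fixes Y S :: "'a::real_normed_vector \<Rightarrow> real"
  assumes "(Y has_derivative Y') (at z within A)" "(S has_derivative S') (at z within A)" "0 < S z"
  shows "((\<lambda>z. heat_tent (Y z) (S z)) has_derivative
      (\<lambda>h. heat_tent_dy (Y z) (S z) * Y' h + heat_tent_dsigma (Y z) (S z) * S' h)) (at z within A)"
  unfolding heat_tent_def heat_tent_dy_def heat_tent_dsigma_def using assms
  by (auto intro!: derivative_eq_intros simp: fun_eq_iff field_simps)

text \<open>The heat equation in the variance parameter: \<open>\<sigma> * \<partial>\<^sub>y\<^sub>y = \<partial>\<^sub>\<sigma>\<close>.\<close>

lemma has_real_derivative_heat_tent_dy:
  assumes "0 < \<sigma>"
  shows "((\<lambda>y. heat_tent_dy y \<sigma>) has_real_derivative heat_tent_dsigma y \<sigma> / \<sigma>) (at y)"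
  unfolding heat_tent_dy_def heat_tent_dsigma_def using assms
  by (auto intro!: derivative_eq_intros simp: field_simps)

lemma heat_tent_dy_bounds:
  assumes "0 < \<sigma>"
  shows "heat_tent_dy y \<sigma> \<in> {-1..1}"
proof -
  have "std_normal_cdf (y / \<sigma>) \<le> std_normal_cdf ((y + 1) / \<sigma>)"
    using assms by (intro std_normal_cdf_mono divide_right_mono) auto
  then show ?thesis
    using std_normal_cdf_pos[of "y / \<sigma>"] std_normal_cdf_less_1[of "(y + 1) / \<sigma>"]
    unfolding heat_tent_dy_def by simp
qed

lemma heat_tent_le:
  assumes "0 < \<sigma>"
  shows "heat_tent y \<sigma> \<le> max (1 - \<bar>y\<bar>) 0 + \<sigma> * std_normal_density 0"
proof -
  have "heat_tent y \<sigma> \<le> max (y + 1) 0 + \<sigma> * std_normal_density 0 - 2 * max y 0"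
    using heat_ramp_le[OF assms, of "y + 1"] heat_ramp_ge[OF assms, of y] heat_ramp_nonneg[OF assms, of y]
    unfolding heat_tent_def by linarith
  also have "\<dots> \<le> max (1 - \<bar>y\<bar>) 0 + \<sigma> * std_normal_density 0"
    by (auto simp: max_def)
  finally show ?thesis .
qed

lemma heat_tent_minus_1_ge:
  assumes "0 < \<sigma>" "\<sigma>\<^sup>2 \<le> 1 / 2"
  shows "(1 - exp (- 1)) * \<sigma> * std_normal_density 0 \<le> heat_tent (- 1) \<sigma>"
proof -
  define r where "r = 2 * \<sigma>\<^sup>2"
  have r: "0 < r" "r \<le> 1"
    using assms by (auto simp: r_def)
  have "r * exp (- 1 / r) \<le> 1 * exp (- 1)"
    using r by (intro mult_mono) (auto simp: field_simps)
  moreover have "2 * \<sigma> ^ 3 * std_normal_density (1 / \<sigma>) = \<sigma> * std_normal_density 0 * (r * exp (- 1 / r))"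
    using assms(1) by (simp add: std_normal_density_def r_def power_one_over power2_eq_square power3_eq_cube)
  ultimately have "2 * \<sigma> ^ 3 * std_normal_density (1 / \<sigma>) \<le> exp (- 1) * \<sigma> * std_normal_density 0"
    using assms(1) mult_left_mono[of "r * exp (- 1 / r)" "exp (- 1)" "\<sigma> * std_normal_density 0"]
    by (simp add: mult_ac)
  then show ?thesis
    using heat_ramp_minus_1_le[OF assms(1)] unfolding heat_tent_def heat_ramp_def
    by (simp add: algebra_simps)
qed

lemma abs_le_sqrt_square_add:
  fixes y c :: real
  assumes "0 \<le> c"
  shows "\<bar>y\<bar> \<le> sqrt (y\<^sup>2 + c)"
  using assms by (intro real_le_rsqrt) simp

lemma abs_divide_sqrt_square_add_le_1:
  fixes y c :: real
  assumes "0 < c"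
  shows "\<bar>y / sqrt (y\<^sup>2 + c)\<bar> \<le> 1"
proof -
  have "0 < sqrt (y\<^sup>2 + c)"
    using assms by (simp add: add_nonneg_pos)
  then show ?thesis
    using abs_le_sqrt_square_add[of c y] assms by (simp add: abs_div divide_le_eq_1)
qed

definition smooth_ramp :: "real \<Rightarrow> real \<Rightarrow> real" where
  "smooth_ramp \<kappa> y = (y + sqrt (y\<^sup>2 + \<kappa>\<^sup>2)) / 2"

definition smooth_ramp_deriv :: "real \<Rightarrow> real \<Rightarrow> real" where
  "smooth_ramp_deriv \<kappa> y = (1 + y / sqrt (y\<^sup>2 + \<kappa>\<^sup>2)) / 2"

lemma has_real_derivative_smooth_ramp:
  assumes "0 < \<kappa>"
  shows "(smooth_ramp \<kappa> has_real_derivative smooth_ramp_deriv \<kappa> y) (at y)"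
proof -
  have "0 < y\<^sup>2 + \<kappa>\<^sup>2"
    using assms by (simp add: add_nonneg_pos)
  then show ?thesis
    unfolding smooth_ramp_def[abs_def] smooth_ramp_deriv_def
    by (auto intro!: derivative_eq_intros simp: field_simps)
qed

lemma continuous_on_smooth_ramp_deriv [continuous_intros]:
  assumes "0 < \<kappa>" "continuous_on S f"
  shows "continuous_on S (\<lambda>x. smooth_ramp_deriv \<kappa> (f x))"
proof -
  have "0 < (f x)\<^sup>2 + \<kappa>\<^sup>2" for x
    using assms(1) by (simp add: add_nonneg_pos)
  then have "sqrt ((f x)\<^sup>2 + \<kappa>\<^sup>2) \<noteq> 0" for x
    by (metis less_irrefl real_sqrt_eq_zero_cancel_iff)
  then show ?thesis
    unfolding smooth_ramp_deriv_def using assms(2) by (intro continuous_intros) auto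
qed

lemma smooth_ramp_deriv_bounds:
  assumes "0 < \<kappa>"
  shows "smooth_ramp_deriv \<kappa> y \<in> {0..1}"
  using abs_divide_sqrt_square_add_le_1[of "\<kappa>\<^sup>2" y, unfolded abs_le_iff] assms
  by (auto simp: smooth_ramp_deriv_def)

lemma max_le_smooth_ramp: "max y 0 \<le> smooth_ramp \<kappa> y"
  using abs_le_sqrt_square_add[of "\<kappa>\<^sup>2" y, unfolded abs_le_iff] by (auto simp: smooth_ramp_def max_def)

lemma smooth_ramp_le:
  assumes "0 \<le> \<kappa>"
  shows "smooth_ramp \<kappa> y \<le> max y 0 + \<kappa> / 2"
proof -
  have "sqrt (y\<^sup>2 + \<kappa>\<^sup>2) \<le> sqrt (y\<^sup>2) + sqrt (\<kappa>\<^sup>2)"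
    by (rule sqrt_add_le_add_sqrt) auto
  then show ?thesis
    using assms by (auto simp: smooth_ramp_def max_def)
qed

definition japanese_bracket :: "real \<Rightarrow> real" where
  "japanese_bracket x = sqrt (x\<^sup>2 + 1)"

lemma one_le_japanese_bracket: "1 \<le> japanese_bracket x"
  by (simp add: japanese_bracket_def)

lemma abs_le_japanese_bracket: "\<bar>x\<bar> \<le> japanese_bracket x"
  unfolding japanese_bracket_def by (rule abs_le_sqrt_square_add) simp

lemma abs_divide_japanese_bracket_le_1: "\<bar>x / japanese_bracket x\<bar> \<le> 1"
  unfolding japanese_bracket_def by (rule abs_divide_sqrt_square_add_le_1) simp

lemma abs_mult_divide_japanese_bracket_le:
  assumes "0 \<le> c"
  shows "\<bar>c * (x / japanese_bracket x)\<bar> \<le> c"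
  using mult_left_mono[OF abs_divide_japanese_bracket_le_1[of x] assms] assms by (simp add: abs_mult)

lemma has_real_derivative_japanese_bracket:
  "(japanese_bracket has_real_derivative x / japanese_bracket x) (at x)"
proof -
  have "0 < x\<^sup>2 + 1"
    by (simp add: add_nonneg_pos)
  then show ?thesis
    unfolding japanese_bracket_def[abs_def] by (auto intro!: derivative_eq_intros simp: field_simps)
qed

lemma has_real_derivative_japanese_bracket_slope:
  "((\<lambda>x. x / japanese_bracket x) has_real_derivative 1 / japanese_bracket x ^ 3) (at x)"
proof -
  have pos: "0 < x\<^sup>2 + 1"
    by (simp add: add_nonneg_pos)
  then have "sqrt (x\<^sup>2 + 1) * sqrt (x\<^sup>2 + 1) = x\<^sup>2 + 1"
    by simp
  with pos show ?thesis
    unfolding japanese_bracket_def[abs_def]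
    by (auto intro!: derivative_eq_intros simp: field_simps power2_eq_square power3_eq_cube)
qed

lemmas has_derivative_japanese_bracket[derivative_intros] =
  has_real_derivative_japanese_bracket[THEN DERIV_compose_FDERIV]

lemma continuous_on_japanese_bracket [continuous_intros]:
  "continuous_on S f \<Longrightarrow> continuous_on S (\<lambda>x. japanese_bracket (f x))"
  unfolding japanese_bracket_def by (intro continuous_intros)

text \<open>A positive \<open>C\<^sup>1\<close> extension of \<open>t + \<tau>\<close> to negative times: test functions must be
  defined on all of \<open>\<real>\<^sup>2\<close>, and the variance \<open>2 * eps * (t + \<tau>)\<close> of the viscous barrier
  must stay positive.\<close>

definition heat_clock :: "real \<Rightarrow> real \<Rightarrow> real" where
  "heat_clock \<tau> t = (if t \<in> {0..} then t + \<tau> else \<tau> * exp (t / \<tau>))"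

lemma heat_clock_pos: "0 < \<tau> \<Longrightarrow> 0 < heat_clock \<tau> t"
  by (simp add: heat_clock_def)

lemma has_real_derivative_heat_clock:
  assumes "0 < \<tau>"
  shows "(heat_clock \<tau> has_real_derivative min 1 (exp (t / \<tau>))) (at t)"
proof -
  have interface: "t = 0" if "t \<in> closure {0..}" "t \<in> closure {..<0}"
    using that by simp
  have "((\<lambda>t. if t \<in> {0..} then t + \<tau> else \<tau> * exp (t / \<tau>)) has_derivative
      (if t \<in> {0..} then (\<lambda>h. 1 * h) else (\<lambda>h. exp (t / \<tau>) * h))) (at t within {0..} \<union> {..<0})"
  proof (rule has_derivative_If_within_closures)
    show "((\<lambda>t. t + \<tau>) has_derivative (\<lambda>h. 1 * h)) (at t within {0..} \<union> (closure {0..} \<inter> closure {..<0}))"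
      by (auto intro!: derivative_eq_intros)
    show "((\<lambda>t. \<tau> * exp (t / \<tau>)) has_derivative (\<lambda>h. exp (t / \<tau>) * h))
        (at t within {..<0} \<union> (closure {0..} \<inter> closure {..<0}))"
      using assms by (auto intro!: derivative_eq_intros)
    show "t + \<tau> = \<tau> * exp (t / \<tau>)" "(\<lambda>h. 1 * h) = (\<lambda>h. exp (t / \<tau>) * h)"
      if "t \<in> closure {0..}" "t \<in> closure {..<0}"
      using interface[OF that] by simp_all
    show "t \<in> {0..} \<union> {..<0}"
      by auto
  qed
  moreover have "(if t \<in> {0..} then (\<lambda>h. 1 * h) else (\<lambda>h. exp (t / \<tau>) * h)) = (\<lambda>h. min 1 (exp (t / \<tau>)) * h)"
    using assms by (simp add: min_def zero_le_divide_iff)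
  moreover have "{0..} \<union> {..<0} = (UNIV :: real set)"
    by auto
  ultimately show ?thesis
    by (simp add: has_field_derivative_def heat_clock_def[abs_def])
qed

lemma continuous_on_heat_clock [continuous_intros]:
  "0 < \<tau> \<Longrightarrow> continuous_on S f \<Longrightarrow> continuous_on S (\<lambda>x. heat_clock \<tau> (f x))"
  by (rule continuous_on_compose2[of UNIV, OF DERIV_continuous_on[OF has_real_derivative_heat_clock]]) auto

lemmas has_real_derivative_heat_clock_chain[derivative_intros] =
  has_real_derivative_heat_clock[THEN DERIV_chain2]

definition heat_width :: "real \<Rightarrow> real \<Rightarrow> real \<Rightarrow> real" where
  "heat_width eps \<tau> t = sqrt (2 * eps * heat_clock \<tau> t)"

lemma heat_width_pos: "0 < eps \<Longrightarrow> 0 < \<tau> \<Longrightarrow> 0 < heat_width eps \<tau> t"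
  by (simp add: heat_width_def heat_clock_pos)

lemma heat_width_nonneg_time: "0 \<le> t \<Longrightarrow> heat_width eps \<tau> t = sqrt (2 * eps * (t + \<tau>))"
  by (simp add: heat_width_def heat_clock_def)

lemma has_real_derivative_heat_width:
  assumes "0 < eps" "0 < \<tau>"
  shows "(heat_width eps \<tau> has_real_derivative eps * min 1 (exp (t / \<tau>)) / heat_width eps \<tau> t) (at t)"
proof -
  have "0 < 2 * eps * heat_clock \<tau> t"
    using assms heat_clock_pos[OF assms(2)] by simp
  then show ?thesis
    unfolding heat_width_def[abs_def] using assms by (auto intro!: derivative_eq_intros simp: field_simps)
qed

lemmas has_derivative_heat_width[derivative_intros] =
  has_real_derivative_heat_width[THEN DERIV_compose_FDERIV]

lemma continuous_on_heat_width [continuous_intros]: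
  "0 < eps \<Longrightarrow> 0 < \<tau> \<Longrightarrow> continuous_on S f \<Longrightarrow> continuous_on S (\<lambda>x. heat_width eps \<tau> (f x))"
  unfolding heat_width_def by (intro continuous_intros) auto

section \<open>Comparison with classical barriers\<close>

lemma strip_interior_max:
  fixes \<Phi> :: "real \<times> real \<Rightarrow> real"
  assumes cont: "continuous_on (UNIV \<times> {0..T}) \<Phi>"
    and far: "\<And>x t. 0 \<le> t \<Longrightarrow> t \<le> T \<Longrightarrow> X < \<bar>x\<bar> \<Longrightarrow> \<Phi> (x, t) < 0"
    and bottom: "\<And>x. \<Phi> (x, 0) < 0" and top: "\<And>x. \<Phi> (x, T) < 0"
    and pos: "0 < \<Phi> (x0, t0)" and t0: "0 \<le> t0" "t0 \<le> T"
  obtains z where "z \<in> spacetime" "snd z < T" "loc_max_in \<Phi> spacetime z"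
proof -
  define R where "R = max X \<bar>x0\<bar>"
  define S where "S = {-R..R} \<times> {0..T}"
  have "compact S"
    unfolding S_def by (intro compact_Times compact_Icc)
  moreover have "(x0, t0) \<in> S"
    using t0 by (auto simp: S_def R_def)
  moreover have "continuous_on S \<Phi>"
    using cont by (rule continuous_on_subset) (auto simp: S_def)
  ultimately obtain z where "z \<in> S" and max: "\<And>y. y \<in> S \<Longrightarrow> \<Phi> y \<le> \<Phi> z"
    using continuous_attains_sup[of S \<Phi>] by blast
  then obtain x1 t1 where z: "z = (x1, t1)" "0 \<le> t1" "t1 \<le> T"
    by (auto simp: S_def)
  have "0 < \<Phi> z"
    using max[OF \<open>(x0, t0) \<in> S\<close>] pos by simp
  then have t1: "0 < t1" "t1 < T"
    using z top[of x1] bottom[of x1] by (auto simp: order_le_less)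
  have "\<Phi> y \<le> \<Phi> z" if y: "y \<in> ball z (T - t1) \<inter> spacetime" for y
  proof (cases "y \<in> S")
    case False
    have "\<bar>snd y - t1\<bar> < T - t1"
      using y dist_snd_le[of y z] by (simp add: z dist_real_def dist_commute)
    then have "0 < snd y" "snd y < T"
      using y by (auto simp: spacetime_def)
    with False have "X < \<bar>fst y\<bar>"
      by (cases y) (auto simp: S_def R_def)
    then have "\<Phi> y < 0"
      using far[of "snd y" "fst y"] \<open>0 < snd y\<close> \<open>snd y < T\<close> by simp
    with \<open>0 < \<Phi> z\<close> show ?thesis
      by simp
  qed (rule max)
  then have "loc_max_in \<Phi> spacetime z"
    unfolding loc_max_in_def using t1 by (intro exI[of _ "T - t1"]) auto
  moreover have "z \<in> spacetime"
    using t1 by (simp add: z spacetime_def)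
  ultimately show ?thesis
    using that t1 z by simp
qed

lemma exp_penalized_interior_max:
  fixes w :: "real \<times> real \<Rightarrow> real"
  assumes cont: "continuous_on (UNIV \<times> {0..}) w"
    and coercive: "\<And>x t. 0 \<le> t \<Longrightarrow> t \<le> T \<Longrightarrow> w (x, t) \<le> B - \<gamma> * \<bar>x\<bar>" and "0 < \<gamma>"
    and init: "\<And>x. w (x, 0) \<le> 0"
    and pos: "0 < w (x0, t0)" and t0: "0 < t0" "t0 < T"
  obtains K l z where "0 < K" "0 < l" "z \<in> spacetime" "snd z < T"
    "loc_max_in (\<lambda>y. w y - K * exp (l * snd y)) spacetime z"
proof -
  define d where "d = w (x0, t0)"
  define K0 where "K0 = \<bar>B\<bar> + 1"
  define l where "l = (\<bar>ln (2 * K0 / d)\<bar> + 1) / (T - t0)"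
  define K where "K = K0 * exp (- l * T)"
  have d: "0 < d" and K0: "0 < K0" and l: "0 < l" and K: "0 < K"
    using pos t0 by (simp_all add: d_def K0_def l_def K_def)
  have penalty_T: "K * exp (l * T) = K0"
    by (simp add: K_def mult_exp_exp)
  have "l * (t0 - T) = - (\<bar>ln (2 * K0 / d)\<bar> + 1)"
    using t0 by (simp add: l_def field_simps)
  then have "exp (l * (t0 - T)) < exp (- ln (2 * K0 / d))"
    by simp
  also have "\<dots> = d / (2 * K0)"
    using d K0 by (simp add: exp_minus)
  finally have penalty_t0: "K * exp (l * t0) < d / 2"
    using K0 by (simp add: K_def mult_exp_exp field_simps)
  define \<Phi> where "\<Phi> y = w y - K * exp (l * snd y)" for y
  have \<Phi>_cont: "continuous_on (UNIV \<times> {0..T}) \<Phi>"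
    unfolding \<Phi>_def by (intro continuous_intros continuous_on_subset[OF cont]) auto
  have \<Phi>_far: "\<Phi> (x, t) < 0" if "0 \<le> t" "t \<le> T" "\<bar>B\<bar> / \<gamma> < \<bar>x\<bar>" for x t
  proof -
    have "\<bar>B\<bar> < \<gamma> * \<bar>x\<bar>"
      using that(3) \<open>0 < \<gamma>\<close> by (simp add: field_simps)
    moreover have "0 < K * exp (l * t)"
      using K by simp
    ultimately show ?thesis
      using coercive[OF that(1,2), of x] abs_ge_self[of B] unfolding \<Phi>_def snd_conv by linarith
  qed
  have \<Phi>_bottom: "\<Phi> (x, 0) < 0" for x
    using init[of x] K by (simp add: \<Phi>_def)
  have \<Phi>_top: "\<Phi> (x, T) < 0" for x
  proof -
    have "0 \<le> \<gamma> * \<bar>x\<bar>"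
      using \<open>0 < \<gamma>\<close> by simp
    then show ?thesis
      using coercive[of T x] t0 penalty_T abs_ge_self[of B] unfolding \<Phi>_def K0_def snd_conv by linarith
  qed
  have \<Phi>_pos: "0 < \<Phi> (x0, t0)"
    using penalty_t0 d by (simp add: \<Phi>_def d_def)
  obtain z where "z \<in> spacetime" "snd z < T" "loc_max_in \<Phi> spacetime z"
  proof (rule strip_interior_max[of T \<Phi> "\<bar>B\<bar> / \<gamma>" x0 t0])
    show "\<Phi> (x, t) < 0" if "0 \<le> t" "t \<le> T" "\<bar>B\<bar> / \<gamma> < \<bar>x\<bar>" for x t
      using that by (rule \<Phi>_far)
  qed (use \<Phi>_cont \<Phi>_bottom \<Phi>_top \<Phi>_pos t0 in auto)
  then show ?thesis
    using that K l by (simp add: \<Phi>_def[abs_def])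
qed

lemma C1_test_continuous_on: "C1_test ph phx pht \<Longrightarrow> continuous_on S ph"
  unfolding C1_test_def
  by (intro has_derivative_continuous_on[where f'="\<lambda>z h. phx z * fst h + pht z * snd h"])
     (blast intro: has_derivative_at_withinI)

lemma C1_test_add_exp_time:
  assumes "C1_test ph phx pht"
  shows "C1_test (\<lambda>z. ph z + c * exp (l * snd z)) phx (\<lambda>z. pht z + c * l * exp (l * snd z))"
  unfolding C1_test_def
proof (intro conjI allI)
  fix z :: "real \<times> real"
  have "(ph has_derivative (\<lambda>h. phx z * fst h + pht z * snd h)) (at z)"
    using assms unfolding C1_test_def by blast
  then show "((\<lambda>z. ph z + c * exp (l * snd z)) has_derivative
      (\<lambda>h. phx z * fst h + (pht z + c * l * exp (l * snd z)) * snd h)) (at z)"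
    by (auto intro!: derivative_eq_intros simp: algebra_simps)
  show "continuous_on UNIV phx"
    using assms unfolding C1_test_def by blast
  show "continuous_on UNIV (\<lambda>z. pht z + c * l * exp (l * snd z))"
    using assms unfolding C1_test_def by (intro continuous_intros) auto
qed

lemma C21_test_add_exp_time:
  assumes "C21_test ph phx pht phxx"
  shows "C21_test (\<lambda>z. ph z + c * exp (l * snd z)) phx (\<lambda>z. pht z + c * l * exp (l * snd z)) phxx"
  using assms C1_test_add_exp_time unfolding C21_test_def by blast

lemma visc_subsol_HJ_le_classical_supersol:
  fixes u \<psi> \<psi>x \<psi>t :: "real \<times> real \<Rightarrow> real"
  assumes sub: "visc_subsol_HJ F u" and cont: "continuous_on (UNIV \<times> {0..}) u"
    and bdd: "bounded (u ` (UNIV \<times> {0..T}))"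
    and test: "C1_test \<psi> \<psi>x \<psi>t" and "0 < \<gamma>"
    and coercive: "\<And>x t. 0 \<le> t \<Longrightarrow> t \<le> T \<Longrightarrow> \<gamma> * \<bar>x\<bar> - C \<le> \<psi> (x, t)"
    and init: "\<And>x. u (x, 0) \<le> \<psi> (x, 0)"
    and super: "\<And>x t. 0 < t \<Longrightarrow> t < T \<Longrightarrow> 0 \<le> \<psi>t (x, t) + F (\<psi>x (x, t))"
    and t0: "0 < t0" "t0 < T"
  shows "u (x0, t0) \<le> \<psi> (x0, t0)"
proof (rule ccontr)
  assume contra: "\<not> ?thesis"
  obtain M where M: "\<And>z. z \<in> UNIV \<times> {0..T} \<Longrightarrow> \<bar>u z\<bar> \<le> M"
    using bdd by (auto simp: bounded_real)
  obtain K l z where K: "0 < K" "0 < l" and z: "z \<in> spacetime" "snd z < T"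
    and "loc_max_in (\<lambda>y. u y - \<psi> y - K * exp (l * snd y)) spacetime z"
  proof (rule exp_penalized_interior_max[of "\<lambda>z. u z - \<psi> z" T "M + C" \<gamma> x0 t0])
    show "continuous_on (UNIV \<times> {0..}) (\<lambda>z. u z - \<psi> z)"
      using cont C1_test_continuous_on[OF test] by (intro continuous_intros)
    show "u (x, t) - \<psi> (x, t) \<le> (M + C) - \<gamma> * \<bar>x\<bar>" if "0 \<le> t" "t \<le> T" for x t
      using M[of "(x, t)"] coercive[OF that, of x] that by auto
    show "u (x, 0) - \<psi> (x, 0) \<le> 0" for x
      using init[of x] by simp
    show "0 < u (x0, t0) - \<psi> (x0, t0)"
      using contra by simp
  qed (use \<open>0 < \<gamma>\<close> t0 in auto)
  then have "loc_max_in (\<lambda>y. u y - (\<psi> y + K * exp (l * snd y))) spacetime z"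
    by (simp add: diff_diff_eq)
  then have "\<psi>t z + K * l * exp (l * snd z) + F (\<psi>x z) \<le> 0"
    using sub C1_test_add_exp_time[OF test, of K l] z(1) unfolding visc_subsol_HJ_def by blast
  moreover have "0 \<le> \<psi>t z + F (\<psi>x z)"
    using super[of "snd z" "fst z"] z by (simp add: spacetime_def mem_Times_iff)
  moreover have "0 < K * l * exp (l * snd z)"
    using K by simp
  ultimately show False
    by linarith
qed

lemma loc_min_in_iff_loc_max_in_uminus: "loc_min_in f S z \<longleftrightarrow> loc_max_in (\<lambda>y. - f y) S z"
  by (simp add: loc_min_in_def loc_max_in_def)

lemma classical_subsol_le_visc_supersol_viscous:
  fixes u v vx vt vxx :: "real \<times> real \<Rightarrow> real"
  assumes super: "visc_supersol_viscous eps F u" and cont: "continuous_on (UNIV \<times> {0..}) u"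
    and bdd: "bounded (u ` (UNIV \<times> {0..T}))"
    and test: "C21_test v vx vt vxx" and "0 < \<gamma>"
    and coercive: "\<And>x t. 0 \<le> t \<Longrightarrow> t \<le> T \<Longrightarrow> v (x, t) \<le> C - \<gamma> * \<bar>x\<bar>"
    and init: "\<And>x. v (x, 0) \<le> u (x, 0)"
    and sub: "\<And>x t. 0 < t \<Longrightarrow> t < T \<Longrightarrow> vt (x, t) + F (vx (x, t)) \<le> eps * vxx (x, t)"
    and t0: "0 < t0" "t0 < T"
  shows "v (x0, t0) \<le> u (x0, t0)"
proof (rule ccontr)
  assume contra: "\<not> ?thesis"
  obtain M where M: "\<And>z. z \<in> UNIV \<times> {0..T} \<Longrightarrow> \<bar>u z\<bar> \<le> M"
    using bdd by (auto simp: bounded_real)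
  have "C1_test v vx vt"
    using test unfolding C21_test_def by blast
  obtain K l z where K: "0 < K" "0 < l" and z: "z \<in> spacetime" "snd z < T"
    and "loc_max_in (\<lambda>y. v y - u y - K * exp (l * snd y)) spacetime z"
  proof (rule exp_penalized_interior_max[of "\<lambda>z. v z - u z" T "C + M" \<gamma> x0 t0])
    show "continuous_on (UNIV \<times> {0..}) (\<lambda>z. v z - u z)"
      using cont C1_test_continuous_on[OF \<open>C1_test v vx vt\<close>] by (intro continuous_intros)
    show "v (x, t) - u (x, t) \<le> (C + M) - \<gamma> * \<bar>x\<bar>" if "0 \<le> t" "t \<le> T" for x t
      using M[of "(x, t)"] coercive[OF that, of x] that by auto
    show "v (x, 0) - u (x, 0) \<le> 0" for x
      using init[of x] by simp
    show "0 < v (x0, t0) - u (x0, t0)"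
      using contra by simp
  qed (use \<open>0 < \<gamma>\<close> t0 in auto)
  then have "loc_min_in (\<lambda>y. u y - (v y + - K * exp (l * snd y))) spacetime z"
    by (simp add: loc_min_in_iff_loc_max_in_uminus algebra_simps)
  then have "eps * vxx z \<le> vt z + - K * l * exp (l * snd z) + F (vx z)"
    using super C21_test_add_exp_time[OF test, of "- K" l] z(1)
    unfolding visc_supersol_viscous_def by blast
  moreover have "vt z + F (vx z) \<le> eps * vxx z"
    using sub[of "snd z" "fst z"] z by (simp add: spacetime_def mem_Times_iff)
  moreover have "0 < K * l * exp (l * snd z)"
    using K by simp
  ultimately show False
    by linarith
qed

section \<open>The inviscid upper bound\<close>

lemma uniformly_continuous_near_interval:
  fixes F :: "real \<Rightarrow> real"
  assumes "continuous_on UNIV F" "0 < e"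
  obtains d where "0 < d" "\<And>a p. a \<in> {lo..hi} \<Longrightarrow> \<bar>p - a\<bar> \<le> d \<Longrightarrow> \<bar>F p - F a\<bar> < e"
proof -
  have "uniformly_continuous_on {lo - 1..hi + 1} F"
    by (intro compact_uniformly_continuous continuous_on_subset[OF assms(1)]) auto
  then obtain d where "0 < d"
    and d: "\<And>x x'. x \<in> {lo - 1..hi + 1} \<Longrightarrow> x' \<in> {lo - 1..hi + 1} \<Longrightarrow> dist x' x < d \<Longrightarrow>
      dist (F x') (F x) < e"
    using assms(2) unfolding uniformly_continuous_on_def by metis
  show ?thesis
  proof (rule that[of "min (d / 2) 1"])
    show "0 < min (d / 2) 1"
      using \<open>0 < d\<close> by simp
    fix a p assume a: "a \<in> {lo..hi}" and p: "\<bar>p - a\<bar> \<le> min (d / 2) 1"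
    then have "p \<in> {lo - 1..hi + 1}"
      by (auto simp: abs_le_iff)
    moreover have "dist p a < d"
      using p \<open>0 < d\<close> by (simp add: dist_real_def)
    ultimately show "\<bar>F p - F a\<bar> < e"
      using d[of a p] a by (simp add: dist_real_def)
  qed
qed

lemma le_of_forall_pos_le_add_mult:
  fixes a b c :: real
  assumes "0 \<le> c" and le: "\<And>\<theta>. 0 < \<theta> \<Longrightarrow> a \<le> b + \<theta> * c"
  shows "a \<le> b"
proof (rule field_le_epsilon)
  fix e :: real assume "0 < e"
  have "e / (c + 1) * c \<le> e"
    using \<open>0 < e\<close> assms(1) by (simp add: field_simps)
  then show "a \<le> b + e"
    using le[of "e / (c + 1)"] \<open>0 < e\<close> assms(1) by simp
qed

definition ramp_barrier :: "real \<Rightarrow> real \<Rightarrow> real \<Rightarrow> real \<times> real \<Rightarrow> real" where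
  "ramp_barrier \<delta> \<theta> \<gamma> z =
    smooth_ramp \<theta> (fst z - snd z + 1) + (\<delta> + \<theta>) * snd z + \<gamma> * japanese_bracket (fst z)"

definition ramp_barrier_dx :: "real \<Rightarrow> real \<Rightarrow> real \<times> real \<Rightarrow> real" where
  "ramp_barrier_dx \<theta> \<gamma> z = smooth_ramp_deriv \<theta> (fst z - snd z + 1) + \<gamma> * (fst z / japanese_bracket (fst z))"

definition ramp_barrier_dt :: "real \<Rightarrow> real \<Rightarrow> real \<times> real \<Rightarrow> real" where
  "ramp_barrier_dt \<delta> \<theta> z = \<delta> + \<theta> - smooth_ramp_deriv \<theta> (fst z - snd z + 1)"

lemma C1_test_ramp_barrier:
  assumes "0 < \<theta>"
  shows "C1_test (ramp_barrier \<delta> \<theta> \<gamma>) (ramp_barrier_dx \<theta> \<gamma>) (ramp_barrier_dt \<delta> \<theta>)"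
  unfolding C1_test_def
proof (intro conjI allI)
  have "japanese_bracket x \<noteq> 0" for x
    using one_le_japanese_bracket[of x] by linarith
  then show "continuous_on UNIV (ramp_barrier_dx \<theta> \<gamma>)" "continuous_on UNIV (ramp_barrier_dt \<delta> \<theta>)"
    unfolding ramp_barrier_dx_def[abs_def] ramp_barrier_dt_def[abs_def] using assms
    by (auto intro!: continuous_intros)
  show "(ramp_barrier \<delta> \<theta> \<gamma> has_derivative
      (\<lambda>h. ramp_barrier_dx \<theta> \<gamma> z * fst h + ramp_barrier_dt \<delta> \<theta> z * snd h)) (at z)" for z
    unfolding ramp_barrier_def[abs_def] ramp_barrier_dx_def ramp_barrier_dt_def using assms
    by (auto intro!: derivative_eq_intros has_real_derivative_smooth_ramp[THEN DERIV_compose_FDERIV]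
        simp: fun_eq_iff algebra_simps)
qed

lemma ramp_barrier_supersol:
  assumes "0 < \<theta>" "0 \<le> \<gamma>"
    and F_ge: "\<And>p. p \<in> {0..1} \<Longrightarrow> p - \<delta> \<le> F p"
    and F_near: "\<And>a p. a \<in> {0..1} \<Longrightarrow> \<bar>p - a\<bar> \<le> \<gamma> \<Longrightarrow> \<bar>F p - F a\<bar> < \<theta>"
  shows "0 \<le> ramp_barrier_dt \<delta> \<theta> z + F (ramp_barrier_dx \<theta> \<gamma> z)"
proof -
  define a where "a = smooth_ramp_deriv \<theta> (fst z - snd z + 1)"
  have a: "a \<in> {0..1}"
    using smooth_ramp_deriv_bounds[OF assms(1)] by (simp add: a_def)
  have "\<bar>ramp_barrier_dx \<theta> \<gamma> z - a\<bar> \<le> \<gamma>"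
    using abs_mult_divide_japanese_bracket_le[OF assms(2)] by (simp add: ramp_barrier_dx_def a_def)
  then have "\<bar>F (ramp_barrier_dx \<theta> \<gamma> z) - F a\<bar> < \<theta>"
    by (rule F_near[OF a])
  then have "F a - \<theta> < F (ramp_barrier_dx \<theta> \<gamma> z)"
    by (simp add: abs_less_iff)
  with F_ge[OF a] show ?thesis
    by (simp add: ramp_barrier_dt_def a_def)
qed

lemma ramp_barrier_coercive:
  assumes "0 \<le> \<gamma>" "0 \<le> t" "t \<le> T"
  shows "\<gamma> * \<bar>x\<bar> - \<bar>\<delta> + \<theta>\<bar> * T \<le> ramp_barrier \<delta> \<theta> \<gamma> (x, t)"
proof -
  have "\<bar>(\<delta> + \<theta>) * t\<bar> \<le> \<bar>\<delta> + \<theta>\<bar> * T"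
    using assms by (simp add: abs_mult mult_left_mono)
  then have "- (\<bar>\<delta> + \<theta>\<bar> * T) \<le> (\<delta> + \<theta>) * t"
    by (rule abs_le_D2[THEN minus_le_iff[THEN iffD1]])
  moreover have "0 \<le> smooth_ramp \<theta> (x - t + 1)"
    using max_le_smooth_ramp[of "x - t + 1" \<theta>] by simp
  moreover have "\<gamma> * \<bar>x\<bar> \<le> \<gamma> * japanese_bracket x"
    using abs_le_japanese_bracket[of x] assms(1) by (rule mult_left_mono)
  ultimately show ?thesis
    by (simp add: ramp_barrier_def)
qed

lemma max_le_ramp_barrier_0:
  assumes "0 \<le> \<gamma>"
  shows "max (x + 1) 0 \<le> ramp_barrier \<delta> \<theta> \<gamma> (x, 0)"
proof -
  have "ramp_barrier \<delta> \<theta> \<gamma> (x, 0) = smooth_ramp \<theta> (x + 1) + \<gamma> * japanese_bracket x"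
    by (simp add: ramp_barrier_def)
  moreover have "0 \<le> \<gamma> * japanese_bracket x"
    using one_le_japanese_bracket[of x] assms by simp
  ultimately show ?thesis
    using max_le_smooth_ramp[of "x + 1" \<theta>] by linarith
qed

lemma ramp_barrier_le:
  assumes "0 \<le> \<theta>" "\<gamma> \<le> \<theta>"
  shows "ramp_barrier \<delta> \<theta> \<gamma> (x, t) \<le> max (x - t + 1) 0 + \<delta> * t + \<theta> * (1 + t + japanese_bracket x)"
proof -
  have "\<gamma> * japanese_bracket x \<le> \<theta> * japanese_bracket x"
    using assms(2) one_le_japanese_bracket[of x] by (intro mult_right_mono) auto
  then show ?thesis
    using smooth_ramp_le[OF assms(1), of "x - t + 1"] assms(1)
    by (simp add: ramp_barrier_def algebra_simps)
qed

lemma visc_subsol_HJ_le_transported_ramp: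
  fixes F :: "real \<Rightarrow> real" and u :: "real \<times> real \<Rightarrow> real"
  assumes sub: "visc_subsol_HJ F u" and cc: "cauchy_class g u"
    and g: "\<And>x. g x \<le> max (x + 1) 0"
    and F_cont: "continuous_on UNIV F" and F_ge: "\<And>p. p \<in> {0..1} \<Longrightarrow> p - \<delta> \<le> F p"
    and "0 < t0"
  shows "u (x0, t0) \<le> max (x0 - t0 + 1) 0 + \<delta> * t0"
proof (rule le_of_forall_pos_le_add_mult)
  show "0 \<le> 1 + t0 + japanese_bracket x0"
    using \<open>0 < t0\<close> one_le_japanese_bracket[of x0] by simp
  fix \<theta> :: real assume "0 < \<theta>"
  obtain d where "0 < d" and F_near: "\<And>a p. a \<in> {0..1} \<Longrightarrow> \<bar>p - a\<bar> \<le> d \<Longrightarrow> \<bar>F p - F a\<bar> < \<theta>"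
    using uniformly_continuous_near_interval[OF F_cont \<open>0 < \<theta>\<close>] by blast
  define \<gamma> where "\<gamma> = min d \<theta>"
  have \<gamma>: "0 < \<gamma>" "\<gamma> \<le> d" "\<gamma> \<le> \<theta>"
    using \<open>0 < d\<close> \<open>0 < \<theta>\<close> by (auto simp: \<gamma>_def)
  have cont: "continuous_on (UNIV \<times> {0..}) u" and bdd: "bounded (u ` (UNIV \<times> {0..t0 + 1}))"
    using cc \<open>0 < t0\<close> by (auto simp: cauchy_class_def)
  have "u (x0, t0) \<le> ramp_barrier \<delta> \<theta> \<gamma> (x0, t0)"
  proof (rule visc_subsol_HJ_le_classical_supersol[OF sub cont bdd C1_test_ramp_barrier[OF \<open>0 < \<theta>\<close>] \<gamma>(1)])
    show "0 \<le> ramp_barrier_dt \<delta> \<theta> (x, t) + F (ramp_barrier_dx \<theta> \<gamma> (x, t))" for x t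
      using \<open>0 < \<theta>\<close> \<gamma> F_ge F_near by (intro ramp_barrier_supersol) auto
    show "\<gamma> * \<bar>x\<bar> - \<bar>\<delta> + \<theta>\<bar> * (t0 + 1) \<le> ramp_barrier \<delta> \<theta> \<gamma> (x, t)"
      if "0 \<le> t" "t \<le> t0 + 1" for x t
      using \<gamma>(1) that by (intro ramp_barrier_coercive) auto
    show "u (x, 0) \<le> ramp_barrier \<delta> \<theta> \<gamma> (x, 0)" for x
      using cc g[of x] max_le_ramp_barrier_0[of \<gamma> x \<delta> \<theta>] \<gamma>(1) by (auto simp: cauchy_class_def)
  qed (use \<open>0 < t0\<close> in auto)
  also have "\<dots> \<le> max (x0 - t0 + 1) 0 + \<delta> * t0 + \<theta> * (1 + t0 + japanese_bracket x0)"
    using \<open>0 < \<theta>\<close> \<gamma>(3) by (intro ramp_barrier_le) auto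
  finally show "u (x0, t0) \<le> max (x0 - t0 + 1) 0 + \<delta> * t0 + \<theta> * (1 + t0 + japanese_bracket x0)" .
qed

section \<open>The viscous lower bound\<close>

definition heat_barrier :: "real \<Rightarrow> real \<Rightarrow> real \<Rightarrow> real \<Rightarrow> real \<times> real \<Rightarrow> real" where
  "heat_barrier eps \<tau> \<theta> \<gamma> z = heat_tent (fst z - snd z) (heat_width eps \<tau> (snd z))
    - heat_width eps \<tau> 0 * std_normal_density 0 - \<theta> * snd z - \<gamma> * japanese_bracket (fst z)"

definition heat_barrier_dx :: "real \<Rightarrow> real \<Rightarrow> real \<Rightarrow> real \<times> real \<Rightarrow> real" where
  "heat_barrier_dx eps \<tau> \<gamma> z = heat_tent_dy (fst z - snd z) (heat_width eps \<tau> (snd z))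
    - \<gamma> * (fst z / japanese_bracket (fst z))"

definition heat_barrier_dt :: "real \<Rightarrow> real \<Rightarrow> real \<Rightarrow> real \<times> real \<Rightarrow> real" where
  "heat_barrier_dt eps \<tau> \<theta> z = heat_tent_dsigma (fst z - snd z) (heat_width eps \<tau> (snd z))
    * (eps * min 1 (exp (snd z / \<tau>)) / heat_width eps \<tau> (snd z))
    - heat_tent_dy (fst z - snd z) (heat_width eps \<tau> (snd z)) - \<theta>"

definition heat_barrier_dxx :: "real \<Rightarrow> real \<Rightarrow> real \<Rightarrow> real \<times> real \<Rightarrow> real" where
  "heat_barrier_dxx eps \<tau> \<gamma> z = heat_tent_dsigma (fst z - snd z) (heat_width eps \<tau> (snd z))
    / heat_width eps \<tau> (snd z) - \<gamma> / japanese_bracket (fst z) ^ 3"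

lemma C21_test_heat_barrier:
  assumes "0 < eps" "0 < \<tau>"
  shows "C21_test (heat_barrier eps \<tau> \<theta> \<gamma>) (heat_barrier_dx eps \<tau> \<gamma>) (heat_barrier_dt eps \<tau> \<theta>)
    (heat_barrier_dxx eps \<tau> \<gamma>)"
  unfolding C21_test_def C1_test_def
proof (intro conjI allI)
  have width: "0 < heat_width eps \<tau> t" for t
    using assms by (rule heat_width_pos)
  show "(heat_barrier eps \<tau> \<theta> \<gamma> has_derivative
      (\<lambda>h. heat_barrier_dx eps \<tau> \<gamma> z * fst h + heat_barrier_dt eps \<tau> \<theta> z * snd h)) (at z)" for z
    unfolding heat_barrier_def[abs_def] heat_barrier_dx_def heat_barrier_dt_def using assms width
    by (auto intro!: derivative_eq_intros simp: fun_eq_iff field_simps)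
  show "((\<lambda>y. heat_barrier_dx eps \<tau> \<gamma> (y, t)) has_real_derivative heat_barrier_dxx eps \<tau> \<gamma> (x, t)) (at x)"
    for x t
  proof -
    have "((\<lambda>y. heat_tent_dy (y - t) (heat_width eps \<tau> t)) has_real_derivative
        heat_tent_dsigma (x - t) (heat_width eps \<tau> t) / heat_width eps \<tau> t * 1) (at x)"
      by (rule DERIV_chain2[where f = "\<lambda>y. heat_tent_dy y (heat_width eps \<tau> t)" and g = "\<lambda>y. y - t",
            OF has_real_derivative_heat_tent_dy[OF width]]) (auto intro!: derivative_eq_intros)
    from DERIV_diff[OF this DERIV_cmult[OF has_real_derivative_japanese_bracket_slope, of \<gamma>]]
    show ?thesis
      by (simp add: heat_barrier_dx_def[abs_def] heat_barrier_dxx_def)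
  qed
  have "japanese_bracket x \<noteq> 0" "heat_width eps \<tau> t \<noteq> 0" for x t
    using one_le_japanese_bracket[of x] width[of t] by auto
  then show "continuous_on UNIV (heat_barrier_dx eps \<tau> \<gamma>)" "continuous_on UNIV (heat_barrier_dt eps \<tau> \<theta>)"
      "continuous_on UNIV (heat_barrier_dxx eps \<tau> \<gamma>)"
    unfolding heat_barrier_dx_def[abs_def] heat_barrier_dt_def[abs_def] heat_barrier_dxx_def[abs_def]
      heat_tent_dy_def heat_tent_dsigma_def
    using assms by (auto intro!: continuous_intros)
qed

lemma heat_barrier_subsol:
  assumes "0 < eps" "0 < \<tau>" "0 < snd z" "0 \<le> \<gamma>" "eps * \<gamma> \<le> \<theta> / 2"
    and F_le: "\<And>p. p \<in> {-1..1} \<Longrightarrow> F p \<le> p"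
    and F_near: "\<And>a p. a \<in> {-1..1} \<Longrightarrow> \<bar>p - a\<bar> \<le> \<gamma> \<Longrightarrow> \<bar>F p - F a\<bar> < \<theta> / 2"
  shows "heat_barrier_dt eps \<tau> \<theta> z + F (heat_barrier_dx eps \<tau> \<gamma> z) \<le> eps * heat_barrier_dxx eps \<tau> \<gamma> z"
proof -
  define \<sigma> where "\<sigma> = heat_width eps \<tau> (snd z)"
  define a where "a = heat_tent_dy (fst z - snd z) \<sigma>"
  define b where "b = heat_tent_dsigma (fst z - snd z) \<sigma> / \<sigma>"
  have a: "a \<in> {-1..1}"
    using heat_tent_dy_bounds[OF heat_width_pos[OF assms(1,2)]] by (simp add: a_def \<sigma>_def)
  have "\<bar>heat_barrier_dx eps \<tau> \<gamma> z - a\<bar> \<le> \<gamma>"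
    using abs_mult_divide_japanese_bracket_le[OF assms(4)] by (simp add: heat_barrier_dx_def a_def \<sigma>_def)
  then have "\<bar>F (heat_barrier_dx eps \<tau> \<gamma> z) - F a\<bar> < \<theta> / 2"
    by (rule F_near[OF a])
  then have "F (heat_barrier_dx eps \<tau> \<gamma> z) < a + \<theta> / 2"
    using F_le[OF a] abs_less_iff[of "F (heat_barrier_dx eps \<tau> \<gamma> z) - F a" "\<theta> / 2"] by linarith
  \<comment> \<open>for \<open>t > 0\<close> we have \<open>\<sigma> * \<sigma>' = eps\<close>, so the profile solves \<open>w\<^sub>t + w\<^sub>x = eps * w\<^sub>x\<^sub>x\<close> exactly\<close>
  moreover have "min 1 (exp (snd z / \<tau>)) = 1"
    using assms(2,3) by simp
  then have "heat_barrier_dt eps \<tau> \<theta> z = eps * b - a - \<theta>"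
    by (simp add: heat_barrier_dt_def a_def b_def \<sigma>_def)
  moreover have "\<gamma> / japanese_bracket (fst z) ^ 3 \<le> \<gamma>"
    using one_le_japanese_bracket[of "fst z"] assms(4)
    by (simp add: divide_le_eq one_le_power mult_le_cancel_left1)
  from mult_left_mono[OF this less_imp_le[OF assms(1)]]
  have "eps * (\<gamma> / japanese_bracket (fst z) ^ 3) \<le> \<theta> / 2"
    using assms(5) by linarith
  moreover have "eps * heat_barrier_dxx eps \<tau> \<gamma> z = eps * b - eps * (\<gamma> / japanese_bracket (fst z) ^ 3)"
    by (simp add: heat_barrier_dxx_def b_def \<sigma>_def right_diff_distrib)
  ultimately show ?thesis
    by linarith
qed

lemma heat_barrier_coercive:
  assumes "0 < eps" "0 < \<tau>" "0 \<le> \<theta>" "0 \<le> \<gamma>" "0 \<le> t" "t \<le> T"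
  shows "heat_barrier eps \<tau> \<theta> \<gamma> (x, t) \<le> (1 + sqrt (2 * eps * (T + \<tau>)) * std_normal_density 0) - \<gamma> * \<bar>x\<bar>"
proof -
  have "heat_tent (x - t) (heat_width eps \<tau> t) \<le> 1 + heat_width eps \<tau> t * std_normal_density 0"
    using heat_tent_le[OF heat_width_pos[OF assms(1,2)], of "x - t" t] by simp
  also have "\<dots> \<le> 1 + sqrt (2 * eps * (T + \<tau>)) * std_normal_density 0"
    using assms by (simp add: heat_width_nonneg_time mult_right_mono)
  finally have "heat_tent (x - t) (heat_width eps \<tau> t) \<le> 1 + sqrt (2 * eps * (T + \<tau>)) * std_normal_density 0" .
  moreover have "\<gamma> * \<bar>x\<bar> \<le> \<gamma> * japanese_bracket x"
    using abs_le_japanese_bracket[of x] assms(4) by (rule mult_left_mono)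
  moreover have "0 \<le> heat_width eps \<tau> 0 * std_normal_density 0 + \<theta> * t"
    using heat_width_pos[OF assms(1,2), of 0] assms(3,5) by simp
  ultimately show ?thesis
    by (simp add: heat_barrier_def)
qed

lemma heat_barrier_0_le:
  assumes "0 < eps" "0 < \<tau>" "0 \<le> \<gamma>"
  shows "heat_barrier eps \<tau> \<theta> \<gamma> (x, 0) \<le> max (1 - \<bar>x\<bar>) 0"
proof -
  have "heat_barrier eps \<tau> \<theta> \<gamma> (x, 0)
      = heat_tent x (heat_width eps \<tau> 0) - heat_width eps \<tau> 0 * std_normal_density 0 - \<gamma> * japanese_bracket x"
    by (simp add: heat_barrier_def)
  moreover have "0 \<le> \<gamma> * japanese_bracket x"
    using one_le_japanese_bracket[of x] assms(3) by simp
  ultimately show ?thesis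
    using heat_tent_le[OF heat_width_pos[OF assms(1,2)], of x 0] by linarith
qed

lemma heat_barrier_ge:
  assumes "0 \<le> t" "\<gamma> \<le> \<theta>"
  shows "heat_tent (x - t) (sqrt (2 * eps * (t + \<tau>))) - sqrt (2 * eps * \<tau>) * std_normal_density 0
    - \<theta> * (t + japanese_bracket x) \<le> heat_barrier eps \<tau> \<theta> \<gamma> (x, t)"
proof -
  have "\<gamma> * japanese_bracket x \<le> \<theta> * japanese_bracket x"
    using assms(2) one_le_japanese_bracket[of x] by (intro mult_right_mono) auto
  then show ?thesis
    using assms(1) by (simp add: heat_barrier_def heat_width_nonneg_time algebra_simps)
qed

lemma heat_tent_le_visc_supersol_viscous:
  fixes F :: "real \<Rightarrow> real" and u :: "real \<times> real \<Rightarrow> real"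
  assumes super: "visc_supersol_viscous eps F u" and cc: "cauchy_class g u"
    and g: "\<And>x. max (1 - \<bar>x\<bar>) 0 \<le> g x"
    and F_cont: "continuous_on UNIV F" and F_le: "\<And>p. p \<in> {-1..1} \<Longrightarrow> F p \<le> p"
    and "0 < eps" "0 < \<tau>" "0 < t0"
  shows "heat_tent (x0 - t0) (sqrt (2 * eps * (t0 + \<tau>))) - sqrt (2 * eps * \<tau>) * std_normal_density 0
    \<le> u (x0, t0)"
proof (rule le_of_forall_pos_le_add_mult)
  show "0 \<le> t0 + japanese_bracket x0"
    using \<open>0 < t0\<close> one_le_japanese_bracket[of x0] by simp
  fix \<theta> :: real assume "0 < \<theta>"
  obtain d where "0 < d" and F_near: "\<And>a p. a \<in> {-1..1} \<Longrightarrow> \<bar>p - a\<bar> \<le> d \<Longrightarrow> \<bar>F p - F a\<bar> < \<theta> / 2"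
    using uniformly_continuous_near_interval[OF F_cont, of "\<theta> / 2"] \<open>0 < \<theta>\<close> by auto
  define \<gamma> where "\<gamma> = min d (min \<theta> (\<theta> / (2 * eps)))"
  have \<gamma>: "0 < \<gamma>" "\<gamma> \<le> d" "\<gamma> \<le> \<theta>"
    using \<open>0 < d\<close> \<open>0 < \<theta>\<close> \<open>0 < eps\<close> by (auto simp: \<gamma>_def)
  have "eps * \<gamma> \<le> eps * (\<theta> / (2 * eps))"
    using \<open>0 < eps\<close> by (intro mult_left_mono) (auto simp: \<gamma>_def)
  then have eps_\<gamma>: "eps * \<gamma> \<le> \<theta> / 2"
    using \<open>0 < eps\<close> by simp
  have cont: "continuous_on (UNIV \<times> {0..}) u" and bdd: "bounded (u ` (UNIV \<times> {0..t0 + 1}))"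
    using cc \<open>0 < t0\<close> by (auto simp: cauchy_class_def)
  have "heat_barrier eps \<tau> \<theta> \<gamma> (x0, t0) \<le> u (x0, t0)"
  proof (rule classical_subsol_le_visc_supersol_viscous[OF super cont bdd
        C21_test_heat_barrier[OF \<open>0 < eps\<close> \<open>0 < \<tau>\<close>] \<gamma>(1)])
    show "heat_barrier_dt eps \<tau> \<theta> (x, t) + F (heat_barrier_dx eps \<tau> \<gamma> (x, t))
        \<le> eps * heat_barrier_dxx eps \<tau> \<gamma> (x, t)" if "0 < t" for x t
      using \<open>0 < eps\<close> \<open>0 < \<tau>\<close> that \<gamma> eps_\<gamma> F_le F_near by (intro heat_barrier_subsol) auto
    show "heat_barrier eps \<tau> \<theta> \<gamma> (x, t)
        \<le> (1 + sqrt (2 * eps * (t0 + 1 + \<tau>)) * std_normal_density 0) - \<gamma> * \<bar>x\<bar>"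
      if "0 \<le> t" "t \<le> t0 + 1" for x t
      using \<open>0 < eps\<close> \<open>0 < \<tau>\<close> \<open>0 < \<theta>\<close> \<gamma>(1) that by (intro heat_barrier_coercive) auto
    show "heat_barrier eps \<tau> \<theta> \<gamma> (x, 0) \<le> u (x, 0)" for x
      using heat_barrier_0_le[OF \<open>0 < eps\<close> \<open>0 < \<tau>\<close>, of \<gamma> \<theta> x] \<gamma>(1) g[of x] cc
      by (auto simp: cauchy_class_def)
  qed (use \<open>0 < t0\<close> in auto)
  with heat_barrier_ge[of t0 \<gamma> \<theta> x0 eps \<tau>] \<open>0 < t0\<close> \<gamma>(3)
  show "heat_tent (x0 - t0) (sqrt (2 * eps * (t0 + \<tau>))) - sqrt (2 * eps * \<tau>) * std_normal_density 0
    \<le> u (x0, t0) + \<theta> * (t0 + japanese_bracket x0)"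
    by simp
qed

lemma visc_supersol_viscous_at_0_1_ge:
  fixes F :: "real \<Rightarrow> real" and u :: "real \<times> real \<Rightarrow> real"
  assumes super: "visc_supersol_viscous eps F u" and cc: "cauchy_class g u"
    and g: "\<And>x. max (1 - \<bar>x\<bar>) 0 \<le> g x"
    and F_cont: "continuous_on UNIV F" and F_le: "\<And>p. p \<in> {-1..1} \<Longrightarrow> F p \<le> p"
    and "0 < eps" "eps < 1 / 4"
  shows "(1 - exp (- 1)) * sqrt (2 * eps) * std_normal_density 0 \<le> u (0, 1)"
proof -
  let ?lower = "\<lambda>\<tau>. (1 - exp (- 1)) * sqrt (2 * eps * (1 + \<tau>)) * std_normal_density 0
    - sqrt (2 * eps * \<tau>) * std_normal_density 0"
  have lim: "(?lower \<longlongrightarrow> ?lower 0) (at_right 0)"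
    by (intro tendsto_intros)
  have "\<forall>\<^sub>F \<tau> in at_right 0. ?lower \<tau> \<le> u (0, 1)"
    unfolding eventually_at_right_field
  proof (intro exI[of _ "1 / (4 * eps) - 1"] conjI allI impI)
    show "0 < 1 / (4 * eps) - 1"
      using assms(6,7) by (simp add: field_simps)
    fix \<tau> :: real assume "0 < \<tau>" "\<tau> < 1 / (4 * eps) - 1"
    then have "(sqrt (2 * eps * (1 + \<tau>)))\<^sup>2 \<le> 1 / 2"
      using assms(6) by (simp add: field_simps)
    then have "(1 - exp (- 1)) * sqrt (2 * eps * (1 + \<tau>)) * std_normal_density 0
        \<le> heat_tent (0 - 1) (sqrt (2 * eps * (1 + \<tau>)))"
      using heat_tent_minus_1_ge[of "sqrt (2 * eps * (1 + \<tau>))"] assms(6) \<open>0 < \<tau>\<close> by simp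
    then show "?lower \<tau> \<le> u (0, 1)"
      using heat_tent_le_visc_supersol_viscous[OF super cc g F_cont F_le assms(6) \<open>0 < \<tau>\<close>, of 1 0]
      by (simp add: add.commute)
  qed
  from tendsto_upperbound[OF lim this trivial_limit_at_right_real] show ?thesis
    by simp
qed

lemma lip_loc_imp_continuous_on: "lip_loc F \<Longrightarrow> continuous_on UNIV F"
  unfolding lip_loc_def
  by (metis continuous_on_interior interior_cball lipschitz_on_continuous_on
      continuous_at_imp_continuous_on mem_ball dist_self)

lemma tangent_le_powr_div:
  fixes m p :: real
  assumes "1 < m" "0 \<le> p"
  shows "p - (1 - 1 / m) \<le> (1 / m) * p powr m"
  using Youngs_inequality[of m "m / (m - 1)" p 1] assms by (simp add: field_simps)

lemma powr_div_le_self: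
  fixes m p :: real
  assumes "1 \<le> m" "0 \<le> p" "p \<le> 1"
  shows "(1 / m) * p powr m \<le> p"
proof -
  have "p powr m \<le> p powr 1"
    using assms by (intro powr_mono') auto
  moreover have "(1 / m) * p powr m \<le> 1 * p powr m"
    using assms(1) by (intro mult_right_mono) auto
  ultimately show ?thesis
    using assms(2) by simp
qed

theorem proposition4p3:
  fixes eps m :: real and F g :: "real \<Rightarrow> real" and ueps u :: "real \<times> real \<Rightarrow> real"
  assumes "0 < eps" "eps < 1/4"
    and "m > 1"
    and "1 - 1/m \<le> (exp 1 - 1) / (2 * sqrt pi * exp 1) * sqrt eps"
    and "lip_loc F"
    and "\<forall>p\<in>{0..1}. F p = (1/m) * p powr m"
    and "\<forall>p\<in>{-1..0}. F p \<le> p"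
    and "\<forall>x. g x = max (1 - \<bar>x\<bar>) 0"
    and "visc_sol_viscous eps F g ueps"
    and "visc_sol_HJ F g u"
  shows "\<bar>ueps (0, 1) - u (0, 1)\<bar> \<ge> (exp 1 - 1) / (2 * sqrt pi * exp 1) * sqrt eps"
proof -
  have F_cont: "continuous_on UNIV F"
    using assms(5) by (rule lip_loc_imp_continuous_on)
  have "p - (1 - 1 / m) \<le> F p" if "p \<in> {0..1}" for p
    using tangent_le_powr_div[OF assms(3)] assms(6) that by simp
  then have "u (0, 1) \<le> max (0 - 1 + 1) 0 + (1 - 1 / m) * 1"
    using assms(8,10) F_cont
    by (intro visc_subsol_HJ_le_transported_ramp[of F u g]) (auto simp: visc_sol_HJ_def)
  then have "u (0, 1) \<le> 1 - 1 / m"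
    by simp
  moreover have "F p \<le> p" if "p \<in> {-1..1}" for p
    using powr_div_le_self[of m p] assms(3,6,7) that by (cases "0 \<le> p") auto
  then have "(1 - exp (- 1)) * sqrt (2 * eps) * std_normal_density 0 \<le> ueps (0, 1)"
    using assms(1,2,8,9) F_cont
    by (intro visc_supersol_viscous_at_0_1_ge[of eps F ueps g]) (auto simp: visc_sol_viscous_def)
  moreover have "(1 - exp (- 1)) * sqrt (2 * eps) * std_normal_density 0
      = 2 * ((exp 1 - 1) / (2 * sqrt pi * exp 1) * sqrt eps)"
    by (simp add: std_normal_density_0 real_sqrt_mult exp_minus field_simps)
  ultimately show ?thesis
    using assms(4) abs_ge_self[of "ueps (0, 1) - u (0, 1)"] by linarith
qed

end
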